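(* With notation as in the context, if $s\in\mathbb{S}_{p^n}$, $t\in\mathbb{S}_{p^n}(h)$ and $s\preceq\mathfrak{a}(t)$, then $\mathfrak{a}(H(s,t))=\mathfrak{a}(t)-s$.
   Context: Let $p$ be a prime, $n\ge1$, $\mathbb{S}_{p^n}=\{0,\dots,p^n-1\}$; write $s\in\mathbb{S}_{p^n}$ as $s=\sum_{i=1}^n s_{(n-i)}p^{n-i}$ with digits in $\{0,\dots,p-1\}$, and $s\preceq t$ means $s_{(n-i)}\le t_{(n-i)}$ for all $i$. Let $b_1,\dots,b_n$ be integers prime to $p$, $\mathfrak{b}(s)=\sum_i s_{(n-i)}p^{n-i}b_i$, and for $t\in\mathbb{Z}$ let $\mathfrak{a}(t)\in\mathbb{S}_{p^n}$ be the unique element with $\mathfrak{b}(\mathfrak{a}(t))\equiv-t\pmod{p^n}$. Let $r:\mathbb{Z}\to\mathbb{S}_{p^n}$ be reduction mod $p^n$. Fix $h\in\mathbb{Z}$, let $\mathbb{S}_{p^n}(h)=\{t\in\mathbb{Z}:h\le t<h+p^n\}$, and for $s\in\mathbb{S}_{p^n}$, $t\in\mathbb{S}_{p^n}(h)$ set $H(s,t)=h+r(\mathfrak{b}(s)+t-h)$. *)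

theory Defs
  imports "HOL-Number_Theory.Number_Theory"
begin

text \<open>Digits: for s in S_{p^n} = {0..<p^n}, s = sum_{i=1..n} digit p n s i * p^(n-i),
  i.e. digit p n s i is the coefficient s_{(n-i)} of p^(n-i).\<close>
definition digit :: "int \<Rightarrow> nat \<Rightarrow> int \<Rightarrow> nat \<Rightarrow> int" where
  "digit p n s i = (s div p ^ (n - i)) mod p"

definition Sp :: "int \<Rightarrow> nat \<Rightarrow> int set" where
  "Sp p n = {0..<p ^ n}"

definition Sph :: "int \<Rightarrow> nat \<Rightarrow> int \<Rightarrow> int set" where
  "Sph p n h = {t. h \<le> t \<and> t < h + p ^ n}"

definition digit_le :: "int \<Rightarrow> nat \<Rightarrow> int \<Rightarrow> int \<Rightarrow> bool" where
  "digit_le p n s t \<longleftrightarrow> (\<forall>i\<in>{1..n}. digit p n s i \<le> digit p n t i)"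

definition frak_b :: "int \<Rightarrow> nat \<Rightarrow> (nat \<Rightarrow> int) \<Rightarrow> int \<Rightarrow> int" where
  "frak_b p n b s = (\<Sum>i=1..n. digit p n s i * p ^ (n - i) * b i)"

definition frak_a :: "int \<Rightarrow> nat \<Rightarrow> (nat \<Rightarrow> int) \<Rightarrow> int \<Rightarrow> int" where
  "frak_a p n b t = (THE a. a \<in> Sp p n \<and> [frak_b p n b a = - t] (mod p ^ n))"

definition red :: "int \<Rightarrow> nat \<Rightarrow> int \<Rightarrow> int" where
  "red p n t = t mod p ^ n"

definition Hmap :: "int \<Rightarrow> nat \<Rightarrow> (nat \<Rightarrow> int) \<Rightarrow> int \<Rightarrow> int \<Rightarrow> int \<Rightarrow> int" where
  "Hmap p n b h s t = h + red p n (frak_b p n b s + t - h)"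

end

theory Submission
  imports Defs
begin

text \<open>Since \<open>b i\<close> is prime to \<open>p\<close>, the lowest digit of \<open>\<frak>b(s)\<close> modulo \<open>p\<close> determines the
  lowest digit of \<open>s\<close>; inductively \<open>\<frak>b\<close> is injective, hence bijective, on residues mod \<open>p\<^sup>n\<close>,
  which makes \<open>\<frak>a\<close> well defined. If \<open>s \<preceq> \<frak>a(t)\<close>, subtracting \<open>s\<close> from \<open>\<frak>a(t)\<close> causes
  no borrows, so \<open>\<frak>a(t) - s\<close> lies in \<open>Sp p n\<close> and \<open>\<frak>b\<close> is additive on it:
  \<open>\<frak>b(\<frak>a(t) - s) = -t - \<frak>b(s) \<equiv> -H(s,t)\<close>.\<close>

text \<open>Digits are indexed from the least significant end (unlike \<open>digit\<close>), so that induction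
  on \<open>n\<close> peels off \<open>a mod p\<close>.\<close>

definition weighted_digit_sum :: "int \<Rightarrow> nat \<Rightarrow> (nat \<Rightarrow> int) \<Rightarrow> int \<Rightarrow> int" where
  "weighted_digit_sum p n c a = (\<Sum>j<n. (a div p ^ j mod p) * p ^ j * c j)"

definition digitwise_le :: "int \<Rightarrow> nat \<Rightarrow> int \<Rightarrow> int \<Rightarrow> bool" where
  "digitwise_le p n s a \<longleftrightarrow> (\<forall>j<n. s div p ^ j mod p \<le> a div p ^ j mod p)"

lemma weighted_digit_sum_0 [simp]: "weighted_digit_sum p 0 c a = 0"
  by (simp add: weighted_digit_sum_def)

lemma weighted_digit_sum_Suc:
  assumes "p > 0"
  shows "weighted_digit_sum p (Suc n) c a
           = (a mod p) * c 0 + p * weighted_digit_sum p n (\<lambda>j. c (Suc j)) (a div p)"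
proof -
  have "(a div p ^ Suc j mod p) * p ^ Suc j * c (Suc j)
          = p * ((a div p) div p ^ j mod p * p ^ j * c (Suc j))" for j
    using assms by (simp add: zdiv_zmult2_eq)
  then have "(\<Sum>j<n. (a div p ^ Suc j mod p) * p ^ Suc j * c (Suc j))
      = p * (\<Sum>j<n. (a div p) div p ^ j mod p * p ^ j * c (Suc j))"
    by (simp only: sum_distrib_left)
  then show ?thesis
    unfolding weighted_digit_sum_def sum.lessThan_Suc_shift by simp
qed

lemma digitwise_le_Suc:
  assumes "p > 0"
  shows "digitwise_le p (Suc n) s a \<longleftrightarrow> s mod p \<le> a mod p \<and> digitwise_le p n (s div p) (a div p)"
  using assms by (simp add: digitwise_le_def All_less_Suc2 zdiv_zmult2_eq)

lemma divmod_diff_no_borrow: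
  fixes a s p :: int
  assumes "p > 0" and "s mod p \<le> a mod p"
  shows "(a - s) mod p = a mod p - s mod p" and "(a - s) div p = a div p - s div p"
proof -
  have eq: "a - s = (a mod p - s mod p) + (a div p - s div p) * p"
    by (simp add: algebra_simps flip: minus_mod_eq_mult_div)
  have "0 \<le> a mod p - s mod p" "a mod p - s mod p < p"
    using assms pos_mod_bound[of p a] pos_mod_sign[of p s] by linarith+
  then show "(a - s) mod p = a mod p - s mod p" and "(a - s) div p = a div p - s div p"
    unfolding eq using assms(1) by simp_all
qed

lemma weighted_digit_sum_cong_imp_cong:
  assumes "p > 0" and "\<forall>j<n. coprime (c j) p"
    and "[weighted_digit_sum p n c a = weighted_digit_sum p n c a'] (mod p ^ n)"
  shows "[a = a'] (mod p ^ n)"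
  using assms(2,3)
proof (induction n arbitrary: c a a')
  case 0
  then show ?case by simp
next
  case (Suc n)
  let ?c' = "\<lambda>j. c (Suc j)"
  have cg: "[(a mod p) * c 0 + p * weighted_digit_sum p n ?c' (a div p)
           = (a' mod p) * c 0 + p * weighted_digit_sum p n ?c' (a' div p)] (mod p * p ^ n)"
    using Suc.prems(2) by (simp add: weighted_digit_sum_Suc[OF assms(1)])
  then have "[(a mod p) * c 0 + p * weighted_digit_sum p n ?c' (a div p)
           = (a' mod p) * c 0 + p * weighted_digit_sum p n ?c' (a' div p)] (mod p)"
    by (rule cong_dvd_modulus) simp
  then have "[(a mod p) * c 0 = (a' mod p) * c 0] (mod p)"
    by (simp add: cong_def)
  then have low: "a mod p = a' mod p"
    using cong_mult_rcancel[of "c 0" p] Suc.prems(1) by (simp add: cong_def)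
  have "[weighted_digit_sum p n ?c' (a div p) = weighted_digit_sum p n ?c' (a' div p)] (mod p ^ n)"
    using cg assms(1) unfolding low by (simp add: cong_iff_dvd_diff flip: right_diff_distrib)
  then have "[a div p = a' div p] (mod p ^ n)"
    using Suc.IH[of ?c'] Suc.prems(1) by simp
  then obtain k where k: "a div p - a' div p = p ^ n * k"
    by (auto simp: cong_iff_dvd_diff dvd_def)
  have "a - a' = p * (a div p - a' div p) + (a mod p - a' mod p)"
    by (simp add: algebra_simps flip: minus_mod_eq_mult_div)
  then have "a - a' = p ^ Suc n * k"
    using k low by simp
  then show ?case by (simp add: cong_iff_dvd_diff)
qed

lemma weighted_digit_sum_diff:
  assumes "p > 0" and "digitwise_le p n s a"
  shows "weighted_digit_sum p n c (a - s) = weighted_digit_sum p n c a - weighted_digit_sum p n c s"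
  using assms(2)
proof (induction n arbitrary: c a s)
  case 0
  then show ?case by simp
next
  case (Suc n)
  then have low: "s mod p \<le> a mod p" and "digitwise_le p n (s div p) (a div p)"
    using digitwise_le_Suc[OF assms(1)] by blast+
  with Suc.IH have high_diff: "weighted_digit_sum p n (\<lambda>j. c (Suc j)) (a div p - s div p)
      = weighted_digit_sum p n (\<lambda>j. c (Suc j)) (a div p)
        - weighted_digit_sum p n (\<lambda>j. c (Suc j)) (s div p)"
    by blast
  show ?case
    unfolding weighted_digit_sum_Suc[OF assms(1)] divmod_diff_no_borrow[OF assms(1) low] high_diff
    by (simp add: algebra_simps)
qed

lemma le_if_digitwise_le:
  fixes s a p :: int
  assumes "p > 0" and "0 \<le> s" and "s < p ^ n" and "0 \<le> a" and "digitwise_le p n s a"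
  shows "s \<le> a"
  using assms(2-5)
proof (induction n arbitrary: a s)
  case 0
  then show ?case by simp
next
  case (Suc n)
  then have low: "s mod p \<le> a mod p" and high: "digitwise_le p n (s div p) (a div p)"
    using digitwise_le_Suc[OF assms(1)] by blast+
  have "s div p * p \<le> s"
    using div_mult_mod_eq[of s p] pos_mod_sign[of p s] assms(1) by linarith
  then have "s div p * p < p ^ n * p"
    using Suc.prems(2) by (simp add: mult.commute)
  then have "s div p < p ^ n"
    using assms(1) by simp
  then have "s div p \<le> a div p"
    using Suc.IH high Suc.prems(1,3) assms(1) by (simp add: pos_imp_zdiv_nonneg_iff)
  then have "s div p * p \<le> a div p * p"
    using assms(1) by simp
  then show ?case
    using low div_mult_mod_eq[of a p] div_mult_mod_eq[of s p] by linarith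
qed

lemma frak_b_eq_weighted_digit_sum: "frak_b p n b x = weighted_digit_sum p n (\<lambda>j. b (n - j)) x"
  unfolding frak_b_def weighted_digit_sum_def digit_def
  by (rule sum.reindex_bij_witness[of _ "\<lambda>j. n - j" "\<lambda>i. n - i"]) auto

lemma digit_le_iff_digitwise_le: "digit_le p n s a \<longleftrightarrow> digitwise_le p n s a"
proof -
  have "(\<forall>i\<in>{1..n}. P (n - i)) \<longleftrightarrow> (\<forall>j<n. P j)" for P :: "nat \<Rightarrow> bool"
  proof
    assume all_i: "\<forall>i\<in>{1..n}. P (n - i)"
    show "\<forall>j<n. P j"
    proof (intro allI impI)
      fix j assume "j < n"
      then have "n - j \<in> {1..n}" and "n - (n - j) = j" by auto
      then show "P j" using all_i by metis
    qed
  qed auto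
  then show ?thesis
    unfolding digit_le_def digitwise_le_def digit_def by simp
qed

lemma frak_b_cong_imp_eq:
  assumes "p > 0" and "\<forall>i\<in>{1..n}. coprime (b i) p"
    and "x \<in> Sp p n" and "y \<in> Sp p n" and "[frak_b p n b x = frak_b p n b y] (mod p ^ n)"
  shows "x = y"
proof -
  have "\<forall>j<n. coprime (b (n - j)) p"
    using assms(2) by auto
  then have "[x = y] (mod p ^ n)"
    by (rule weighted_digit_sum_cong_imp_cong[OF assms(1)])
      (use assms(5) in \<open>simp add: frak_b_eq_weighted_digit_sum\<close>)
  then show ?thesis
    using assms(3,4) cong_less_imp_eq_int unfolding Sp_def by auto
qed

lemma frak_b_solvable_unique:
  assumes "p > 0" and "\<forall>i\<in>{1..n}. coprime (b i) p"
  shows "\<exists>!x. x \<in> Sp p n \<and> [frak_b p n b x = u] (mod p ^ n)"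
proof -
  define f where "f x = frak_b p n b x mod p ^ n" for x
  have "inj_on f (Sp p n)"
  proof (rule inj_onI)
    fix x y assume "x \<in> Sp p n" "y \<in> Sp p n" "f x = f y"
    then show "x = y"
      using frak_b_cong_imp_eq[OF assms] unfolding f_def cong_def by blast
  qed
  moreover have "f ` Sp p n \<subseteq> Sp p n"
    using assms(1) unfolding f_def Sp_def by auto
  ultimately have "f ` Sp p n = Sp p n"
    using endo_inj_surj[of "Sp p n" f] by (simp add: Sp_def)
  moreover have "u mod p ^ n \<in> Sp p n"
    using assms(1) unfolding Sp_def by simp
  ultimately obtain x where x: "x \<in> Sp p n" "f x = u mod p ^ n"
    by (metis imageE)
  then have x_cong: "[frak_b p n b x = u] (mod p ^ n)"
    unfolding f_def cong_def by simp
  show ?thesis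
  proof (rule ex1I)
    show "x \<in> Sp p n \<and> [frak_b p n b x = u] (mod p ^ n)"
      using x(1) x_cong by blast
  next
    fix y assume y: "y \<in> Sp p n \<and> [frak_b p n b y = u] (mod p ^ n)"
    then have "[frak_b p n b y = frak_b p n b x] (mod p ^ n)"
      using cong_trans cong_sym[OF x_cong] by blast
    then show "y = x"
      using frak_b_cong_imp_eq[OF assms] y x(1) by blast
  qed
qed

lemma frak_a_spec:
  assumes "p > 0" and "\<forall>i\<in>{1..n}. coprime (b i) p"
  shows "frak_a p n b t \<in> Sp p n" and "[frak_b p n b (frak_a p n b t) = - t] (mod p ^ n)"
  using theI'[OF frak_b_solvable_unique[OF assms]] unfolding frak_a_def by blast+

lemma frak_a_eqI:
  assumes "p > 0" and "\<forall>i\<in>{1..n}. coprime (b i) p"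
    and "x \<in> Sp p n" and "[frak_b p n b x = - t] (mod p ^ n)"
  shows "frak_a p n b t = x"
  unfolding frak_a_def using assms(3,4)
  by (intro the1_equality[OF frak_b_solvable_unique[OF assms(1,2)]]) auto

lemma Hmap_cong: "[Hmap p n b h s t = frak_b p n b s + t] (mod p ^ n)"
  unfolding Hmap_def red_def cong_def by (simp add: mod_add_right_eq)

theorem proposition3p11:
  fixes p :: int and n :: nat and b :: "nat \<Rightarrow> int" and h s t :: int
  assumes "prime p" and "n \<ge> 1"
    and "\<forall>i\<in>{1..n}. coprime (b i) p"
    and "s \<in> Sp p n" and "t \<in> Sph p n h"
    and "digit_le p n s (frak_a p n b t)"
  shows "frak_a p n b (Hmap p n b h s t) = frak_a p n b t - s"
proof -
  have p: "p > 0" using assms(1) prime_gt_0_int by blast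
  define A where "A = frak_a p n b t"
  have A: "A \<in> Sp p n" "[frak_b p n b A = - t] (mod p ^ n)"
    using frak_a_spec[OF p assms(3)] unfolding A_def by blast+
  have le: "digitwise_le p n s A"
    using assms(6) unfolding A_def digit_le_iff_digitwise_le .
  then have "s \<le> A"
    using le_if_digitwise_le[OF p] assms(4) A(1) unfolding Sp_def by auto
  then have diff_in: "A - s \<in> Sp p n"
    using A(1) assms(4) unfolding Sp_def by auto
  have "frak_b p n b (A - s) = frak_b p n b A - frak_b p n b s"
    unfolding frak_b_eq_weighted_digit_sum using weighted_digit_sum_diff[OF p le] .
  then have "[frak_b p n b (A - s) = - t - frak_b p n b s] (mod p ^ n)"
    using cong_diff[OF A(2) cong_refl, of "frak_b p n b s"] by simp
  also have "- t - frak_b p n b s = - (frak_b p n b s + t)"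
    by simp
  also have "[- (frak_b p n b s + t) = - Hmap p n b h s t] (mod p ^ n)"
    using Hmap_cong[THEN cong_sym] by (simp only: cong_minus_minus_iff)
  finally have "[frak_b p n b (A - s) = - Hmap p n b h s t] (mod p ^ n)" .
  then have "frak_a p n b (Hmap p n b h s t) = A - s"
    by (rule frak_a_eqI[OF p assms(3) diff_in])
  then show ?thesis
    unfolding A_def .
qed

end
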